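(* Let $G=(V,A)$ be a graph and $\mathfrak n=\mathfrak n(G)$ as below, and let $S:W^*\to W$ be an antisymmetric linear map with $T_\alpha ST_\beta+T_\beta ST_\alpha=0$ for all $\alpha,\beta\in A$. Write $S_{i,j}$ for its matrix entries with respect to the bases $\{e_i^*\}$ of $W^*$ and $\{e_i\}$ of $W$. Then: (1) if there is an edge joining $e_i$ and $e_j$, then $S_{i,j}=0$; (2) if there are edges $\alpha$ joining $e_i$ and $e_{i'}$ and $\beta$ joining $e_j$ and $e_{j'}$ with $\{i,i'\}\cap\{j,j'\}=\emptyset$, then $S_{i,j}=0$.
   Context: $G=(V,A)$ is a finite simple graph without loops and without isolated vertices, $V=\{e_1,\dots,e_n\}$ ordered, each edge joining $e_i,e_j$ ($i<j$) oriented from $e_i$ to $e_j$. $\mathfrak n(G)$ has basis $V\cup A$, $[e_i,e_j]=\alpha$ if $\alpha$ goes from $e_i$ to $e_j$, $[e_i,e_j]=0$ if not adjacent, edges central; $W=\mathrm{span}(V)$, center $\mathfrak z=\mathrm{span}(A)$. For $\alpha\in A$ define $T_\alpha:W\to W^*$ by $[v,w]=\sum_{\alpha}T_\alpha(v)(w)\alpha$; explicitly, if $\alpha$ joins $e_i$ to $e_j$ with $i<j$, then $T_\alpha(e_i)=e_j^*$, $T_\alpha(e_j)=-e_i^*$, $T_\alpha(e_k)=0$ for $k\ne i,j$. $S$ antisymmetric means $S^t=-S$ under $W^{**}\cong W$. *)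

theory Defs
  imports Complex_Main
begin

(* Vertices e_0,...,e_{n-1} are indexed by 0..<n.  An edge joining e_i and e_j with i<j
   (oriented from e_i to e_j) is the pair (i,j) in A. *)

definition graph_ok :: "nat \<Rightarrow> (nat \<times> nat) set \<Rightarrow> bool" where
  "graph_ok n A \<longleftrightarrow> A \<subseteq> {(i,j). i < j \<and> j < n}
      \<and> (\<forall>k<n. \<exists>(i,j)\<in>A. k = i \<or> k = j)"

definition joins :: "(nat \<times> nat) set \<Rightarrow> nat \<Rightarrow> nat \<Rightarrow> bool" where
  "joins A i j \<longleftrightarrow> (i,j) \<in> A \<or> (j,i) \<in> A"

(* Matrix of T_alpha : W -> W^dual w.r.t. bases {e_l} and {e_k^dual}:
   T_alpha(e_l) = sum_k Tmat alpha k l * e_k^dual.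
   For alpha = (i,j), i<j: T(e_i) = e_j^dual, T(e_j) = - e_i^dual. *)
definition Tmat :: "nat \<times> nat \<Rightarrow> nat \<Rightarrow> nat \<Rightarrow> real" where
  "Tmat \<alpha> k l = (if k = snd \<alpha> \<and> l = fst \<alpha> then 1
                  else if k = fst \<alpha> \<and> l = snd \<alpha> then -1 else 0)"

(* Matrix of T_alpha S T_beta : W -> W^dual, where S : W^dual -> W has matrix S
   (S(e_q^dual) = sum_p S p q * e_p). *)
definition TST :: "nat \<Rightarrow> nat \<times> nat \<Rightarrow> (nat \<Rightarrow> nat \<Rightarrow> real) \<Rightarrow> nat \<times> nat \<Rightarrow> nat \<Rightarrow> nat \<Rightarrow> real" where
  "TST n \<alpha> S \<beta> k l = (\<Sum>p<n. \<Sum>q<n. Tmat \<alpha> k p * S p q * Tmat \<beta> q l)"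

definition antisym_mat :: "nat \<Rightarrow> (nat \<Rightarrow> nat \<Rightarrow> real) \<Rightarrow> bool" where
  "antisym_mat n S \<longleftrightarrow> (\<forall>i<n. \<forall>j<n. S j i = - S i j)"

end

theory Submission
  imports Defs
begin

text \<open>Evaluating the relation T_\<alpha> S T_\<beta> + T_\<beta> S T_\<alpha> = 0 at the entry (k,l) with k an
  endpoint of \<alpha> and l an endpoint of \<beta> isolates a single entry of S (twice if \<alpha> = \<beta>,
  once if \<alpha> and \<beta> are disjoint, since the second summand then has a zero row).\<close>

definition anticommute :: "nat \<Rightarrow> (nat \<Rightarrow> nat \<Rightarrow> real) \<Rightarrow> nat \<times> nat \<Rightarrow> nat \<times> nat \<Rightarrow> bool" where
  "anticommute n S \<alpha> \<beta> \<longleftrightarrow> (\<forall>k<n. \<forall>l<n. TST n \<alpha> S \<beta> k l + TST n \<beta> S \<alpha> k l = 0)"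

lemma sum_Tmat_mult:
  assumes "a \<noteq> b" "a < n" "b < n"
  shows "(\<Sum>p<n. Tmat (a,b) k p * f p) = (if k = b then f a else if k = a then - f b else 0)"
proof -
  have "(\<Sum>p<n. Tmat (a,b) k p * f p)
      = (\<Sum>p<n. (if p = a then (if k = b then f a else 0) else 0)
              + (if p = b then (if k = a then - f b else 0) else 0))"
    by (rule sum.cong) (use assms in \<open>auto simp: Tmat_def\<close>)
  also have "\<dots> = (if k = b then f a else 0) + (if k = a then - f b else 0)"
    using assms by (simp add: sum.distrib)
  finally show ?thesis using assms by auto
qed

lemma sum_mult_Tmat:
  assumes "c \<noteq> d" "c < n" "d < n"
  shows "(\<Sum>q<n. g q * Tmat (c,d) q l) = (if l = c then g d else if l = d then - g c else 0)"
proof -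
  have "(\<Sum>q<n. g q * Tmat (c,d) q l)
      = (\<Sum>q<n. (if q = d then (if l = c then g d else 0) else 0)
              + (if q = c then (if l = d then - g c else 0) else 0))"
    by (rule sum.cong) (use assms in \<open>auto simp: Tmat_def\<close>)
  also have "\<dots> = (if l = c then g d else 0) + (if l = d then - g c else 0)"
    using assms by (simp add: sum.distrib)
  finally show ?thesis using assms by auto
qed

lemma TST_pair:
  assumes "a \<noteq> b" "a < n" "b < n" "c \<noteq> d" "c < n" "d < n"
  shows "TST n (a,b) S (c,d) k l =
    (if k = b then (if l = c then S a d else if l = d then - S a c else 0)
     else if k = a then - (if l = c then S b d else if l = d then - S b c else 0) else 0)"
proof -
  have "TST n (a,b) S (c,d) k l = (\<Sum>p<n. Tmat (a,b) k p * (\<Sum>q<n. S p q * Tmat (c,d) q l))"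
    unfolding TST_def by (simp add: sum_distrib_left mult.assoc)
  also have "\<dots> = (\<Sum>p<n. Tmat (a,b) k p * (if l = c then S p d else if l = d then - S p c else 0))"
    using assms by (simp add: sum_mult_Tmat)
  finally show ?thesis
    using assms by (simp add: sum_Tmat_mult)
qed

lemma TST_row_outside_edge:
  assumes "k \<notin> {a, b}"
  shows "TST n (a,b) S \<beta> k l = 0"
  using assms by (simp add: TST_def Tmat_def)

lemma anticommute_self_edge_entries:
  assumes "a < b" "b < n" "anticommute n S (a,b) (a,b)"
  shows "S a b = 0 \<and> S b a = 0"
proof -
  have "TST n (a,b) S (a,b) b a + TST n (a,b) S (a,b) b a = 0"
   and "TST n (a,b) S (a,b) a b + TST n (a,b) S (a,b) a b = 0"
    using assms unfolding anticommute_def by auto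
  then show ?thesis
    using assms by (simp add: TST_pair)
qed

lemma anticommute_disjoint_edges_entries:
  assumes "a < b" "b < n" "c < d" "d < n" "{a, b} \<inter> {c, d} = {}"
    and "anticommute n S (a,b) (c,d)"
    and "x \<in> {a, b}" "y \<in> {c, d}"
  shows "S x y = 0"
proof -
  have entry: "TST n (a,b) S (c,d) k l = 0" if "k \<in> {a, b}" "l < n" for k l
  proof -
    have "TST n (c,d) S (a,b) k l = 0"
      using that assms(5) by (intro TST_row_outside_edge) auto
    moreover have "k < n" using that assms(1,2) by auto
    ultimately show ?thesis
      using assms(6) that(2) unfolding anticommute_def by force
  qed
  have "S a d = 0" "S a c = 0" "S b d = 0" "S b c = 0"
    using entry[of b c] entry[of b d] entry[of a c] entry[of a d] assms(1-5)
    by (simp_all add: TST_pair)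
  then show ?thesis
    using assms(7,8) by auto
qed

lemma graph_ok_edge_bounds:
  assumes "graph_ok n A" "(a,b) \<in> A"
  shows "a < b \<and> b < n"
  using assms unfolding graph_ok_def by auto

lemma joins_obtain_edge:
  assumes "joins A i j"
  obtains a b where "(a,b) \<in> A" "{a, b} = {i, j}"
  using assms unfolding joins_def by (metis insert_commute)

theorem mainTheorem11:
  fixes n :: nat and A :: "(nat \<times> nat) set" and S :: "nat \<Rightarrow> nat \<Rightarrow> real"
  assumes "graph_ok n A"
    and "antisym_mat n S"
    and "\<forall>\<alpha>\<in>A. \<forall>\<beta>\<in>A. \<forall>k<n. \<forall>l<n. TST n \<alpha> S \<beta> k l + TST n \<beta> S \<alpha> k l = 0"
  shows "(\<forall>i<n. \<forall>j<n. joins A i j \<longrightarrow> S i j = 0)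
       \<and> (\<forall>i i' j j'. joins A i i' \<and> joins A j j' \<and> {i, i'} \<inter> {j, j'} = {} \<longrightarrow> S i j = 0)"
proof -
  have ac: "anticommute n S \<alpha> \<beta>" if "\<alpha> \<in> A" "\<beta> \<in> A" for \<alpha> \<beta>
    using assms(3) that unfolding anticommute_def by blast
  note bounds = graph_ok_edge_bounds[OF assms(1)]
  have edge: "S i j = 0" if "joins A i j" for i j
  proof -
    from that consider "(i,j) \<in> A" | "(j,i) \<in> A" unfolding joins_def by blast
    then show ?thesis
      by cases (use anticommute_self_edge_entries bounds ac in blast)+
  qed
  have disjoint: "S i j = 0"
    if h: "joins A i i'" "joins A j j'" "{i, i'} \<inter> {j, j'} = {}" for i i' j j'
  proof -
    obtain a b where ab: "(a,b) \<in> A" "{a, b} = {i, i'}" using h(1) joins_obtain_edge by metis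
    obtain c d where cd: "(c,d) \<in> A" "{c, d} = {j, j'}" using h(2) joins_obtain_edge by metis
    show ?thesis
      using anticommute_disjoint_edges_entries[OF _ _ _ _ _ ac[OF ab(1) cd(1)], of i j]
        bounds[OF ab(1)] bounds[OF cd(1)] ab(2) cd(2) h(3) by auto
  qed
  show ?thesis
    using edge disjoint by (intro conjI allI impI) (simp, metis)
qed

end
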